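(* Let $\mathcal{B}$ be a set of data expressions closed under taking sub-expressions, and let $N$ be such that $1\le\mathrm{Card}(\mathcal{B})<N$. Then for every type $\sigma$ with $\mathrm{depth}(\sigma)\le K$ in which exactly $L$ sorts occur (counted with repetitions): $\mathrm{Card}([\![\sigma]\!])<\exp_2^K(N^L)$. Moreover, for $e,u\in[\![\sigma]\!]$, testing whether $e\sqsupseteq u$ takes at most $\exp_2^K(N^{(L+1)^3})$ comparisons between elements of $\mathcal{B}$.
   Context: Types are built from a finite set of sorts by $\sigma ::= \iota \mid \sigma\times\tau \mid \sigma\Rightarrow\tau$. Arrow depth: $\mathrm{depth}(\iota)=0$, $\mathrm{depth}(\sigma\times\tau)=\max(\mathrm{depth}(\sigma),\mathrm{depth}(\tau))$, $\mathrm{depth}(\sigma\Rightarrow\tau)=1+\max(\mathrm{depth}(\sigma),\mathrm{depth}(\tau))$. Data expressions are built from data constructors (each with a type $\kappa_1\Rightarrow\cdots\Rightarrow\kappa_m\Rightarrow\iota$, $\iota$ a sort, arguments of type order $0$, i.e. built only from sorts and products) as $d ::= c\,d_1\cdots d_m \mid (d,d')$, fully applied and well-typed. $\exp_2^0(n)=n$, $\exp_2^{K+1}(n)=2^{\exp_2^K(n)}$. Non-deterministic extensional values: $[\![\iota]\!]=\{d\in\mathcal{B}\mid d:\iota\}$ for sorts $\iota$; $[\![\sigma\times\tau]\!]=[\![\sigma]\!]\times[\![\tau]\!]$; $[\![\sigma\Rightarrow\tau]\!]=\{A_{\sigma\Rightarrow\tau}\mid A\subseteq[\![\sigma]\!]\times[\![\tau]\!]\}$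 (arbitrary relations, tagged with their type). The relation $\sqsupseteq$ on extensional values of the same type: $d\sqsupseteq b$ iff $d=b$ for elements of a sort; $(e_1,e_2)\sqsupseteq(u_1,u_2)$ iff $e_1\sqsupseteq u_1$ and $e_2\sqsupseteq u_2$; $A_\sigma\sqsupseteq B_\sigma$ for functional $\sigma$ iff for every $(e,u)\in B$ there is $u'\sqsupseteq u$ with $(e,u')\in A$. *)

theory Defs
  imports Main "HOL-Library.FSet"
begin

datatype 's ty = Sort 's | Prod "'s ty" "'s ty" | Arr "'s ty" "'s ty"

primrec depth :: "'s ty \<Rightarrow> nat" where
  "depth (Sort _) = 0"
| "depth (Prod s t) = max (depth s) (depth t)"
| "depth (Arr s t) = Suc (max (depth s) (depth t))"

primrec nsorts :: "'s ty \<Rightarrow> nat" where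
  "nsorts (Sort _) = 1"
| "nsorts (Prod s t) = nsorts s + nsorts t"
| "nsorts (Arr s t) = nsorts s + nsorts t"

primrec exp2 :: "nat \<Rightarrow> nat \<Rightarrow> nat" where
  "exp2 0 n = n"
| "exp2 (Suc K) n = 2 ^ exp2 K n"

text \<open>Data expressions: a constructor applied to a list of arguments, or a pair.
  A signature assigns to each constructor c of type k1 => ... => km => iota the pair
  ([k1,...,km], iota).\<close>
datatype 'c dexp = Con 'c "'c dexp list" | DPair "'c dexp" "'c dexp"

inductive dtyped :: "('c \<Rightarrow> 's ty list \<times> 's) \<Rightarrow> 'c dexp \<Rightarrow> 's ty \<Rightarrow> bool"
  for sig where
  con: "sig c = (ks, i) \<Longrightarrow> length ds = length ks \<Longrightarrow>
        (\<forall>j < length ds. dtyped sig (ds ! j) (ks ! j)) \<Longrightarrow> dtyped sig (Con c ds) (Sort i)"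
| pair: "dtyped sig d s \<Longrightarrow> dtyped sig d' t \<Longrightarrow> dtyped sig (DPair d d') (Prod s t)"

fun immsubs :: "'c dexp \<Rightarrow> 'c dexp set" where
  "immsubs (Con c ds) = set ds"
| "immsubs (DPair d d') = {d, d'}"

definition sub_closed :: "'c dexp set \<Rightarrow> bool" where
  "sub_closed B \<longleftrightarrow> (\<forall>d\<in>B. immsubs d \<subseteq> B)"

text \<open>Relations are finite sets (fset); since B is finite, all value sets are finite,
  so this is no restriction.  Relations are tagged with their (functional) type.\<close>
datatype ('c, 's) ev = EBase "'c dexp" | EPair "('c, 's) ev" "('c, 's) ev"
  | ERel "'s ty" "(('c, 's) ev \<times> ('c, 's) ev) fset"

primrec sem :: "('c \<Rightarrow> 's ty list \<times> 's) \<Rightarrow> 'c dexp set \<Rightarrow> 's ty \<Rightarrow> ('c, 's) ev set" where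
  "sem sig B (Sort i) = EBase ` {d \<in> B. dtyped sig d (Sort i)}"
| "sem sig B (Prod s t) = {EPair a b | a b. a \<in> sem sig B s \<and> b \<in> sem sig B t}"
| "sem sig B (Arr s t) = {ERel (Arr s t) A | A. fset A \<subseteq> sem sig B s \<times> sem sig B t}"

text \<open>The relation e \<sqsupseteq> u (for documentation; the theorem concerns the cost of testing it).\<close>
primrec ext_geq :: "'s ty \<Rightarrow> ('c, 's) ev \<Rightarrow> ('c, 's) ev \<Rightarrow> bool" where
  "ext_geq (Sort _) e u = (e = u)"
| "ext_geq (Prod s t) e u = (case (e, u) of (EPair e1 e2, EPair u1 u2) \<Rightarrow>
       ext_geq s e1 u1 \<and> ext_geq t e2 u2 | _ \<Rightarrow> False)"
| "ext_geq (Arr s t) e u = (case (e, u) of (ERel _ A, ERel _ B) \<Rightarrow>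
       (\<forall>p \<in> fset B. \<exists>q \<in> fset A. fst q = fst p \<and> ext_geq t (snd q) (snd p)) | _ \<Rightarrow> False)"

text \<open>Number of comparisons between elements of B performed by the naive test for
  equality of two extensional values of type s (each relation inclusion checked by
  exhaustive search over all pairs).\<close>
primrec eq_cost :: "'s ty \<Rightarrow> ('c, 's) ev \<Rightarrow> ('c, 's) ev \<Rightarrow> nat" where
  "eq_cost (Sort _) e u = 1"
| "eq_cost (Prod s t) e u = (case (e, u) of (EPair e1 e2, EPair u1 u2) \<Rightarrow>
       eq_cost s e1 u1 + eq_cost t e2 u2 | _ \<Rightarrow> 0)"
| "eq_cost (Arr s t) e u = (case (e, u) of (ERel _ A, ERel _ B) \<Rightarrow>
       (\<Sum>p \<in> fset A. \<Sum>q \<in> fset B. eq_cost s (fst p) (fst q) + eq_cost t (snd p) (snd q))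
     + (\<Sum>q \<in> fset B. \<Sum>p \<in> fset A. eq_cost s (fst q) (fst p) + eq_cost t (snd q) (snd p))
     | _ \<Rightarrow> 0)"

text \<open>Number of comparisons between elements of B performed by the naive test of
  e \<sqsupseteq> u: for every (e0,u0) in B and every (e1,u1) in A, test e1 = e0 and u1 \<sqsupseteq> u0.\<close>
primrec geq_cost :: "'s ty \<Rightarrow> ('c, 's) ev \<Rightarrow> ('c, 's) ev \<Rightarrow> nat" where
  "geq_cost (Sort _) e u = 1"
| "geq_cost (Prod s t) e u = (case (e, u) of (EPair e1 e2, EPair u1 u2) \<Rightarrow>
       geq_cost s e1 u1 + geq_cost t e2 u2 | _ \<Rightarrow> 0)"
| "geq_cost (Arr s t) e u = (case (e, u) of (ERel _ A, ERel _ B) \<Rightarrow>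
       (\<Sum>p \<in> fset B. \<Sum>q \<in> fset A. eq_cost s (fst q) (fst p) + geq_cost t (snd q) (snd p))
     | _ \<Rightarrow> 0)"

end

theory Submission
  imports Defs
begin

text \<open>Every value set is finite: a product of two value sets is in bijection with their
  cartesian product and a function space with its power set, so
  \<open>|[\<sigma>\<times>\<tau>]| = |[\<sigma>]|\<cdot>|[\<tau>]|\<close> and \<open>|[\<sigma>\<Rightarrow>\<tau>]| = 2^(|[\<sigma>]|\<cdot>|[\<tau>]|)\<close>.  Since \<open>exp\<^sub>2\<^sup>K\<close> is
  supermultiplicative on arguments \<open>\<ge> 2\<close>, an induction on \<open>\<sigma>\<close> gives the size bound, the
  arrow case climbing one level of the exponential tower.  The naive \<open>\<sqsupseteq>\<close>-test on relations
  compares every pair of pairs, so its cost is bounded by \<open>2 c\<^sup>2\<close> times the cost on the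
  components, where \<open>c\<close> bounds the size of the relations; the cubic exponent absorbs the
  square and the sum.\<close>

lemma finite_fsets_within: "finite P \<Longrightarrow> finite {A. fset A \<subseteq> P}"
  by (rule inj_on_finite[of fset _ "Pow P"]) (auto simp: inj_on_def fset_inject)

lemma card_fsets_within:
  assumes "finite P"
  shows "card {A. fset A \<subseteq> P} = 2 ^ card P"
proof -
  have "bij_betw fset {A. fset A \<subseteq> P} (Pow P)"
  proof (rule bij_betw_imageI)
    show "inj_on fset {A. fset A \<subseteq> P}" by (simp add: inj_on_def fset_inject)
    show "fset ` {A. fset A \<subseteq> P} = Pow P"
    proof (intro equalityI subsetI)
      fix X assume "X \<in> Pow P"
      then have "finite X" using assms finite_subset by auto
      then have "X = fset (Abs_fset X)" by (simp add: Abs_fset_inverse)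
      then show "X \<in> fset ` {A. fset A \<subseteq> P}" using \<open>X \<in> Pow P\<close> by auto
    qed auto
  qed
  then show ?thesis using assms by (simp add: bij_betw_same_card card_Pow)
qed

lemma sem_Prod_eq_image:
  "sem sig B (Prod s t) = (\<lambda>(a, b). EPair a b) ` (sem sig B s \<times> sem sig B t)"
  by auto

lemma sem_Arr_eq_image:
  "sem sig B (Arr s t) = ERel (Arr s t) ` {A. fset A \<subseteq> sem sig B s \<times> sem sig B t}"
  by auto

lemma finite_sem: "finite B \<Longrightarrow> finite (sem sig B \<sigma>)"
  by (induction \<sigma>) (simp_all add: sem_Prod_eq_image sem_Arr_eq_image finite_fsets_within
      del: sem.simps(2,3))

lemma card_sem_Sort_le: "finite B \<Longrightarrow> card (sem sig B (Sort i)) \<le> card B"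
  by (auto intro: order_trans[OF card_image_le card_mono])

lemma card_sem_Prod:
  "finite B \<Longrightarrow> card (sem sig B (Prod s t)) = card (sem sig B s) * card (sem sig B t)"
  unfolding sem_Prod_eq_image
  by (subst card_image) (auto simp: inj_on_def card_cartesian_product)

lemma card_sem_Arr:
  assumes "finite B"
  shows "card (sem sig B (Arr s t)) = 2 ^ (card (sem sig B s) * card (sem sig B t))"
proof -
  have "finite (sem sig B s \<times> sem sig B t)" using assms by (simp add: finite_sem)
  then show ?thesis
    unfolding sem_Arr_eq_image
    by (simp add: card_image inj_on_def card_fsets_within card_cartesian_product)
qed

lemma add_le_mult_nat: "2 \<le> (x::nat) \<Longrightarrow> 2 \<le> y \<Longrightarrow> x + y \<le> x * y"
proof -
  assume "2 \<le> x" "2 \<le> y"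
  then obtain a b where "x = a + 2" "y = b + 2" by (metis le_add_diff_inverse2)
  then show ?thesis by (simp add: algebra_simps)
qed

lemma exp2_ge: "n \<le> exp2 K n"
  by (induction K) (auto intro: le_less_trans[OF _ less_exp] less_imp_le)

lemma exp2_mono: "m \<le> n \<Longrightarrow> exp2 K m \<le> exp2 K n"
  by (induction K) auto

lemma exp2_mult_le: "2 \<le> a \<Longrightarrow> 2 \<le> b \<Longrightarrow> exp2 K a * exp2 K b \<le> exp2 K (a * b)"
proof (induction K)
  case 0
  then show ?case by simp
next
  case (Suc K)
  have "exp2 K a + exp2 K b \<le> exp2 K a * exp2 K b"
    using Suc.prems exp2_ge[of a K] exp2_ge[of b K] by (intro add_le_mult_nat) auto
  also have "\<dots> \<le> exp2 K (a * b)" using Suc by simp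
  finally show ?case by (simp add: power_add[symmetric])
qed

lemma exp2_pow_mult_le:
  assumes "2 \<le> N" "1 \<le> a" "1 \<le> b"
  shows "exp2 K (N ^ a) * exp2 K (N ^ b) \<le> exp2 K (N ^ (a + b))"
proof -
  have "2 \<le> N ^ c" if "1 \<le> c" for c
    using assms(1) power_increasing[OF that, of N] by simp
  then show ?thesis using assms by (simp add: exp2_mult_le power_add)
qed

lemma exp2_pow_add_le:
  assumes "2 \<le> N" "1 \<le> a" "1 \<le> b"
  shows "exp2 K (N ^ a) + exp2 K (N ^ b) \<le> exp2 K (N ^ (a + b))"
proof -
  have "2 \<le> exp2 K (N ^ c)" if "1 \<le> c" for c
    using assms(1) power_increasing[OF that, of N] exp2_ge[of "N ^ c" K] by simp
  then have "exp2 K (N ^ a) + exp2 K (N ^ b) \<le> exp2 K (N ^ a) * exp2 K (N ^ b)"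
    using assms by (intro add_le_mult_nat)
  also have "\<dots> \<le> exp2 K (N ^ (a + b))" using assms by (rule exp2_pow_mult_le)
  finally show ?thesis .
qed

lemma exp2_pow_mono: "1 \<le> N \<Longrightarrow> m \<le> n \<Longrightarrow> exp2 K (N ^ m) \<le> exp2 K (N ^ n)"
  by (intro exp2_mono power_increasing)

lemma exp2_pow_sq_mult_le:
  assumes "2 \<le> N" "1 \<le> L" "1 \<le> m" "c \<le> exp2 K (N ^ L)" "C \<le> exp2 K (N ^ m)"
  shows "c\<^sup>2 * C \<le> exp2 K (N ^ (2 * L + m))"
proof -
  have "c\<^sup>2 \<le> exp2 K (N ^ L) * exp2 K (N ^ L)"
    unfolding power2_eq_square using assms(4) by (intro mult_mono) simp_all
  also have "\<dots> \<le> exp2 K (N ^ (2 * L))"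
    unfolding mult_2 by (rule exp2_pow_mult_le[OF assms(1,2,2)])
  finally have "c\<^sup>2 * C \<le> exp2 K (N ^ (2 * L)) * exp2 K (N ^ m)"
    using assms(5) by (intro mult_mono) simp_all
  also have "\<dots> \<le> exp2 K (N ^ (2 * L + m))"
    using assms(1-3) by (intro exp2_pow_mult_le) simp_all
  finally show ?thesis .
qed

lemma nsorts_ge_1: "1 \<le> nsorts \<sigma>"
  by (induction \<sigma>) auto

lemma card_sem_less_exp2:
  assumes "finite B" "card B < N" "2 \<le> N" "depth \<sigma> \<le> K"
  shows "card (sem sig B \<sigma>) < exp2 K (N ^ nsorts \<sigma>)"
  using assms(4)
proof (induction \<sigma> arbitrary: K)
  case (Sort i)
  have "card (sem sig B (Sort i)) < N" using card_sem_Sort_le[OF assms(1), of sig i] assms(2) by linarith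
  then show ?case using exp2_ge[of N K] by simp
next
  case (Prod s t)
  have "card (sem sig B (Prod s t)) = card (sem sig B s) * card (sem sig B t)"
    by (rule card_sem_Prod[OF assms(1)])
  also have "\<dots> < exp2 K (N ^ nsorts s) * exp2 K (N ^ nsorts t)"
    using Prod by (intro mult_strict_mono') auto
  also have "\<dots> \<le> exp2 K (N ^ nsorts (Prod s t))"
    using exp2_pow_mult_le[OF assms(3) nsorts_ge_1 nsorts_ge_1] by simp
  finally show ?case .
next
  case (Arr s t)
  then obtain K' where K: "K = Suc K'" "depth s \<le> K'" "depth t \<le> K'" by (cases K) auto
  have "card (sem sig B s) * card (sem sig B t) < exp2 K' (N ^ nsorts s) * exp2 K' (N ^ nsorts t)"
    using Arr.IH K by (intro mult_strict_mono') auto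
  also have "\<dots> \<le> exp2 K' (N ^ nsorts (Arr s t))"
    using exp2_pow_mult_le[OF assms(3) nsorts_ge_1 nsorts_ge_1] by simp
  finally show ?case unfolding K card_sem_Arr[OF assms(1)] by simp
qed

text \<open>Each inclusion test between two relations of type \<open>s \<Rightarrow> t\<close> visits at most \<open>c\<^sup>2\<close> pairs
  of pairs, \<open>c = |[s]|\<cdot>|[t]|\<close>, and each visit costs at most the budgets of \<open>s\<close> and \<open>t\<close>.\<close>

primrec cmp_budget :: "('c \<Rightarrow> 's ty list \<times> 's) \<Rightarrow> 'c dexp set \<Rightarrow> 's ty \<Rightarrow> nat" where
  "cmp_budget sig B (Sort _) = 1"
| "cmp_budget sig B (Prod s t) = cmp_budget sig B s + cmp_budget sig B t"
| "cmp_budget sig B (Arr s t) =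
     2 * (card (sem sig B s) * card (sem sig B t))\<^sup>2 * (cmp_budget sig B s + cmp_budget sig B t)"

lemma double_sum_le:
  fixes f :: "'a \<Rightarrow> 'b \<Rightarrow> nat"
  assumes "\<And>p q. p \<in> P \<Longrightarrow> q \<in> Q \<Longrightarrow> f p q \<le> C"
  shows "(\<Sum>p\<in>P. \<Sum>q\<in>Q. f p q) \<le> card P * (card Q * C)"
proof -
  have "(\<Sum>q\<in>Q. f p q) \<le> card Q * C" if "p \<in> P" for p
    using sum_bounded_above[of Q "f p" C] assms that by simp
  then have "(\<Sum>p\<in>P. \<Sum>q\<in>Q. f p q) \<le> (\<Sum>p\<in>P. card Q * C)"
    by (rule sum_mono)
  then show ?thesis by simp
qed

lemma sem_ArrE:
  assumes "e \<in> sem sig B (Arr s t)" "finite B"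
  obtains A where "e = ERel (Arr s t) A" "fset A \<subseteq> sem sig B s \<times> sem sig B t"
    "card (fset A) \<le> card (sem sig B s) * card (sem sig B t)"
proof -
  obtain A where A: "e = ERel (Arr s t) A" "fset A \<subseteq> sem sig B s \<times> sem sig B t"
    using assms(1) by auto
  moreover have "finite (sem sig B s \<times> sem sig B t)" using assms(2) by (simp add: finite_sem)
  ultimately show thesis
    using that card_mono[OF _ A(2)] by (simp add: card_cartesian_product)
qed

lemma eq_cost_le_cmp_budget:
  assumes "finite B"
  shows "e \<in> sem sig B \<sigma> \<Longrightarrow> u \<in> sem sig B \<sigma> \<Longrightarrow> eq_cost \<sigma> e u \<le> cmp_budget sig B \<sigma>"
proof (induction \<sigma> arbitrary: e u)
  case (Sort i)
  then show ?case by simp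
next
  case (Prod s t)
  then obtain e1 e2 u1 u2 where "e = EPair e1 e2" "u = EPair u1 u2"
    "e1 \<in> sem sig B s" "e2 \<in> sem sig B t" "u1 \<in> sem sig B s" "u2 \<in> sem sig B t" by auto
  then show ?case using Prod.IH by (simp add: add_mono)
next
  case (Arr s t)
  let ?c = "card (sem sig B s) * card (sem sig B t)"
  let ?C = "cmp_budget sig B s + cmp_budget sig B t"
  obtain A A' where eu: "e = ERel (Arr s t) A" "u = ERel (Arr s t) A'"
    "fset A \<subseteq> sem sig B s \<times> sem sig B t" "fset A' \<subseteq> sem sig B s \<times> sem sig B t"
    and card_A: "card (fset A) \<le> ?c" "card (fset A') \<le> ?c"
    using sem_ArrE[OF Arr.prems(1) assms] sem_ArrE[OF Arr.prems(2) assms] by metis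
  have pair_cost: "eq_cost s (fst p) (fst q) + eq_cost t (snd p) (snd q) \<le> ?C"
    if "p \<in> fset A \<union> fset A'" "q \<in> fset A \<union> fset A'" for p q
  proof -
    have "fst p \<in> sem sig B s" "fst q \<in> sem sig B s" "snd p \<in> sem sig B t" "snd q \<in> sem sig B t"
      using that eu by auto
    then show ?thesis using add_mono[OF Arr.IH] by blast
  qed
  have "eq_cost (Arr s t) e u \<le> card (fset A) * (card (fset A') * ?C) + card (fset A') * (card (fset A) * ?C)"
    unfolding eu eq_cost.simps ev.case prod.case
    by (rule add_mono; rule double_sum_le; rule pair_cost) auto
  also have "\<dots> \<le> ?c * (?c * ?C) + ?c * (?c * ?C)"
    using card_A by (intro add_mono mult_mono) auto
  finally show ?case by (simp add: power2_eq_square)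
qed

lemma geq_cost_le_cmp_budget:
  assumes "finite B"
  shows "e \<in> sem sig B \<sigma> \<Longrightarrow> u \<in> sem sig B \<sigma> \<Longrightarrow> geq_cost \<sigma> e u \<le> cmp_budget sig B \<sigma>"
proof (induction \<sigma> arbitrary: e u)
  case (Sort i)
  then show ?case by simp
next
  case (Prod s t)
  then obtain e1 e2 u1 u2 where "e = EPair e1 e2" "u = EPair u1 u2"
    "e1 \<in> sem sig B s" "e2 \<in> sem sig B t" "u1 \<in> sem sig B s" "u2 \<in> sem sig B t" by auto
  then show ?case using Prod.IH by (simp add: add_mono)
next
  case (Arr s t)
  let ?c = "card (sem sig B s) * card (sem sig B t)"
  let ?C = "cmp_budget sig B s + cmp_budget sig B t"
  obtain A A' where eu: "e = ERel (Arr s t) A" "u = ERel (Arr s t) A'"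
    "fset A \<subseteq> sem sig B s \<times> sem sig B t" "fset A' \<subseteq> sem sig B s \<times> sem sig B t"
    and card_A: "card (fset A) \<le> ?c" "card (fset A') \<le> ?c"
    using sem_ArrE[OF Arr.prems(1) assms] sem_ArrE[OF Arr.prems(2) assms] by metis
  have pair_cost: "eq_cost s (fst q) (fst p) + geq_cost t (snd q) (snd p) \<le> ?C"
    if "p \<in> fset A'" "q \<in> fset A" for p q
  proof -
    have "fst q \<in> sem sig B s" "fst p \<in> sem sig B s" "snd q \<in> sem sig B t" "snd p \<in> sem sig B t"
      using that eu by auto
    then show ?thesis
      using add_mono[OF eq_cost_le_cmp_budget[OF assms] Arr.IH(2)] by blast
  qed
  have "geq_cost (Arr s t) e u \<le> card (fset A') * (card (fset A) * ?C)"
    unfolding eu geq_cost.simps ev.case prod.case using pair_cost by (rule double_sum_le)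
  also have "\<dots> \<le> ?c * (?c * ?C)" using card_A by (intro mult_mono) auto
  finally show ?case by (simp add: power2_eq_square)
qed

lemma cube_sum_le: "1 \<le> (x::nat) \<Longrightarrow> 1 \<le> y \<Longrightarrow> 2 * (x + y) + (x + 1)^3 + (y + 1)^3 \<le> (x + y + 1)^3"
proof -
  assume "1 \<le> x" "1 \<le> y"
  then obtain a b where "x = Suc a" "y = Suc b" by (metis Suc_le_D One_nat_def)
  then show ?thesis by (simp add: power3_eq_cube algebra_simps)
qed

lemma double_le_pow2: "2 * (n::nat) \<le> 2 ^ n"
proof (induction n)
  case (Suc n)
  have "2 \<le> (2::nat) ^ Suc n" by simp
  then show ?case using Suc by (cases n) auto
qed simp

lemma cmp_budget_le_exp2:
  assumes "finite B" "card B < N" "2 \<le> N" "depth \<sigma> \<le> K"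
  shows "cmp_budget sig B \<sigma> \<le> exp2 K (N ^ ((nsorts \<sigma> + 1) ^ 3))"
  using assms(4)
proof (induction \<sigma> arbitrary: K)
  case (Sort i)
  have "1 \<le> N ^ ((nsorts (Sort i) + 1) ^ 3)" using assms(3) by simp
  then show ?case unfolding cmp_budget.simps by (rule order_trans[OF _ exp2_ge])
next
  case (Prod s t)
  let ?a = "(nsorts s + 1) ^ 3" and ?b = "(nsorts t + 1) ^ 3"
  have "cmp_budget sig B s \<le> exp2 K (N ^ ?a)" "cmp_budget sig B t \<le> exp2 K (N ^ ?b)"
    using Prod by auto
  then have "cmp_budget sig B (Prod s t) \<le> exp2 K (N ^ ?a) + exp2 K (N ^ ?b)"
    unfolding cmp_budget.simps by (rule add_mono)
  also have "\<dots> \<le> exp2 K (N ^ (?a + ?b))"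
    by (rule exp2_pow_add_le[OF assms(3)]) simp_all
  also have "\<dots> \<le> exp2 K (N ^ ((nsorts (Prod s t) + 1) ^ 3))"
  proof (rule exp2_pow_mono)
    show "?a + ?b \<le> (nsorts (Prod s t) + 1) ^ 3"
      using cube_sum_le[OF nsorts_ge_1 nsorts_ge_1, of s t] unfolding nsorts.simps by linarith
  qed (use assms(3) in simp)
  finally show ?case .
next
  case (Arr s t)
  then obtain K' where K: "K = Suc K'" "depth s \<le> K'" "depth t \<le> K'" by (cases K) auto
  let ?a = "(nsorts s + 1) ^ 3" and ?b = "(nsorts t + 1) ^ 3" and ?L = "nsorts s + nsorts t"
  let ?c = "card (sem sig B s) * card (sem sig B t)"
  let ?C = "cmp_budget sig B s + cmp_budget sig B t"
  have L_pos: "1 \<le> ?L" using nsorts_ge_1[of s] by simp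
  have "?c = card (sem sig B (Prod s t))" by (rule card_sem_Prod[OF assms(1), symmetric])
  also have "\<dots> \<le> exp2 K' (N ^ ?L)"
    using less_imp_le[OF card_sem_less_exp2[OF assms(1-3), of "Prod s t" K']] K by simp
  finally have c_le: "?c \<le> exp2 K' (N ^ ?L)" .
  have "cmp_budget sig B s \<le> exp2 K' (N ^ ?a)" "cmp_budget sig B t \<le> exp2 K' (N ^ ?b)"
    using Arr.IH K by auto
  then have "?C \<le> exp2 K' (N ^ ?a) + exp2 K' (N ^ ?b)" by (rule add_mono)
  also have "\<dots> \<le> exp2 K' (N ^ (?a + ?b))"
    by (rule exp2_pow_add_le[OF assms(3)]) simp_all
  finally have C_le: "?C \<le> exp2 K' (N ^ (?a + ?b))" .
  have "cmp_budget sig B (Arr s t) = 2 * (?c\<^sup>2 * ?C)" by simp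
  also have "\<dots> \<le> 2 * exp2 K' (N ^ (2 * ?L + (?a + ?b)))"
    using exp2_pow_sq_mult_le[OF assms(3) L_pos _ c_le C_le] by (simp add: trans_le_add1)
  also have "\<dots> \<le> 2 * exp2 K' (N ^ ((nsorts (Arr s t) + 1) ^ 3))"
  proof (intro mult_le_mono2 exp2_pow_mono)
    show "2 * ?L + (?a + ?b) \<le> (nsorts (Arr s t) + 1) ^ 3"
      using cube_sum_le[OF nsorts_ge_1 nsorts_ge_1, of s t] unfolding nsorts.simps by linarith
  qed (use assms(3) in simp)
  also have "\<dots> \<le> exp2 K (N ^ ((nsorts (Arr s t) + 1) ^ 3))"
    unfolding K exp2.simps by (rule double_le_pow2)
  finally show ?case .
qed

theorem lemma12:
  fixes sig :: "'c \<Rightarrow> ('s::finite) ty list \<times> 's"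
    and B :: "'c dexp set" and N K L :: nat and \<sigma> :: "'s ty"
  assumes "\<forall>c. \<forall>k \<in> set (fst (sig c)). depth k = 0"
    and "\<forall>d \<in> B. \<exists>t. dtyped sig d t"
    and "sub_closed B"
    and "finite B" and "1 \<le> card B" and "card B < N"
    and "depth \<sigma> \<le> K" and "nsorts \<sigma> = L"
  shows "card (sem sig B \<sigma>) < exp2 K (N ^ L)
       \<and> (\<forall>e \<in> sem sig B \<sigma>. \<forall>u \<in> sem sig B \<sigma>. geq_cost \<sigma> e u \<le> exp2 K (N ^ ((L + 1) ^ 3)))"
proof (intro conjI ballI)
  have two_le_N: "2 \<le> N" using assms(5,6) by simp
  show "card (sem sig B \<sigma>) < exp2 K (N ^ L)"
    using card_sem_less_exp2[OF assms(4,6) two_le_N assms(7)] assms(8) by simp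
  fix e u assume "e \<in> sem sig B \<sigma>" "u \<in> sem sig B \<sigma>"
  then show "geq_cost \<sigma> e u \<le> exp2 K (N ^ ((L + 1) ^ 3))"
    using order_trans[OF geq_cost_le_cmp_budget[OF assms(4)]
        cmp_budget_le_exp2[OF assms(4,6) two_le_N assms(7)]] assms(8)
    by simp
qed

end
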